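(* Let $T>0$ and let $\omega\in\mathbf{R}$, $\omega\neq 0$, be such that $e^{2i\omega T}\neq 1$. Then for any $a\in H^1$ and $g\in H^2$ there exists a unique solution $u\in\mathcal{W}^1_\infty$ of the boundary value problem $$\frac{d^2u}{dt^2}(t)=Au(t),\ t\in(0,T),\qquad u(0)=a,\qquad \int_0^T e^{i\omega t}u(t)\,dt=g .$$ Moreover, there exists $c>0$ depending only on $A$ (together with its boundary conditions, i.e. the eigen-system $\{\lambda_k,v_k\}$), $T$ and $\omega$ such that $$\|u\|_{\mathcal{W}^1_\infty}\le c\left(\|a\|_{H^1}+\|g\|_{H^2}\right)\qquad\forall a\in H^1,\ g\in H^2 .$$
   Context: Let $\mathrm{D}\subset\mathbf{R}^n$ be a domain and $H=L_2(\mathrm{D};\mathbf{C})$ (complex-valued square integrable functions) with inner product $(\cdot,\cdot)_H$. $A$ is a self-adjoint operator on $H$ (with boundary conditions encoded by a dense subset $H_{BC}\subset H$) mapping real-valued functions to real-valued functions, and there is an orthonormal basis $\{v_k\}_{k\ge1}$ of $H$ consisting of eigenfunctions, $Av_k=-\lambda_k v_k$, with $\lambda_k\in(0,+\infty)$ and $\lambda_k\to+\infty$. For $q=-1,0,1,2$, $H^q$ is the completion (closure of $H_{BC}\cap D(A)$) with respect to the norm $\|u\|_{H^q}=\big(\sum_{k\ge1}\lambda_k^q|(u,v_k)_H|^2\big)^{1/2}$; $H^0=H$. For $r\in[1,\infty]$, $\mathcal{C}^q=C([0,T];H^q)$, $\mathcal{L}^q_r=L_r([0,T];H^q)$ (Lebesgue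 measure), and $\mathcal{W}^1_r=\{u\in\mathcal{C}^0\cap\mathcal{L}^1_r:\ du/dt\in\mathcal{C}^0\}$ with norm $\|u\|_{\mathcal{W}^1_r}=\|u\|_{\mathcal{C}^0}+\|u\|_{\mathcal{L}^1_r}+\|du/dt\|_{\mathcal{C}^0}$. A function $u\in\mathcal{W}^1_1$ is said to satisfy $\frac{d^2u}{dt^2}=Au$ if $\frac{du}{dt}(t)-\frac{du}{dt}(s)=\int_s^tAu(r)\,dr$ holds in $H^{-1}$ for all $0\le s\le t\le T$; the conditions $u(0)=a$ and $\int_0^Te^{i\omega t}u(t)dt=g$ are required as equalities in $H$. *)

theory Defs
  imports "HOL-Analysis.Analysis" "HOL-Probability.Essential_Supremum"
begin

text \<open>Coefficient model: an element w of H is identified with its sequence of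
 Fourier coefficients k \<mapsto> (w, v_k)_H with respect to the orthonormal eigenbasis;
 lam k is the eigenvalue lambda_k (A v_k = - lambda_k v_k).\<close>

type_synonym coeffs = "nat \<Rightarrow> complex"

definition Hsq :: "(nat \<Rightarrow> real) \<Rightarrow> int \<Rightarrow> coeffs \<Rightarrow> ennreal" where
  "Hsq lam q w = (\<Sum>k. ennreal (lam k powi q * (cmod (w k))\<^sup>2))"

definition inH :: "(nat \<Rightarrow> real) \<Rightarrow> int \<Rightarrow> coeffs \<Rightarrow> bool" where
  "inH lam q w \<longleftrightarrow> Hsq lam q w < \<infinity>"

definition Hnorm :: "(nat \<Rightarrow> real) \<Rightarrow> int \<Rightarrow> coeffs \<Rightarrow> real" where
  "Hnorm lam q w = sqrt (enn2real (Hsq lam q w))"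

definition inC :: "(nat \<Rightarrow> real) \<Rightarrow> int \<Rightarrow> real \<Rightarrow> (real \<Rightarrow> coeffs) \<Rightarrow> bool" where
  "inC lam q T u \<longleftrightarrow> (\<forall>t\<in>{0..T}. inH lam q (u t)) \<and>
     (\<forall>t\<in>{0..T}. ((\<lambda>s. Hnorm lam q (u s - u t)) \<longlongrightarrow> 0) (at t within {0..T}))"

definition Cnorm :: "(nat \<Rightarrow> real) \<Rightarrow> int \<Rightarrow> real \<Rightarrow> (real \<Rightarrow> coeffs) \<Rightarrow> real" where
  "Cnorm lam q T u = (SUP t\<in>{0..T}. Hnorm lam q (u t))"

definition Linf_sq :: "(nat \<Rightarrow> real) \<Rightarrow> int \<Rightarrow> real \<Rightarrow> (real \<Rightarrow> coeffs) \<Rightarrow> ennreal" where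
  "Linf_sq lam q T u = esssup (restrict_space lborel {0..T}) (\<lambda>t. Hsq lam q (u t))"

definition inLinf :: "(nat \<Rightarrow> real) \<Rightarrow> int \<Rightarrow> real \<Rightarrow> (real \<Rightarrow> coeffs) \<Rightarrow> bool" where
  "inLinf lam q T u \<longleftrightarrow> Linf_sq lam q T u < \<infinity>"

definition Linf_norm :: "(nat \<Rightarrow> real) \<Rightarrow> int \<Rightarrow> real \<Rightarrow> (real \<Rightarrow> coeffs) \<Rightarrow> real" where
  "Linf_norm lam q T u = sqrt (enn2real (Linf_sq lam q T u))"

definition has_H_deriv :: "(nat \<Rightarrow> real) \<Rightarrow> real \<Rightarrow> (real \<Rightarrow> coeffs) \<Rightarrow> (real \<Rightarrow> coeffs) \<Rightarrow> bool" where
  "has_H_deriv lam T u u' \<longleftrightarrow> (\<forall>t\<in>{0..T}.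
     ((\<lambda>s. Hnorm lam 0 ((\<lambda>k. (u s k - u t k) / complex_of_real (s - t)) - u' t)) \<longlongrightarrow> 0)
       (at t within {0..T}))"

definition inW1inf :: "(nat \<Rightarrow> real) \<Rightarrow> real \<Rightarrow> (real \<Rightarrow> coeffs) \<Rightarrow> (real \<Rightarrow> coeffs) \<Rightarrow> bool" where
  "inW1inf lam T u u' \<longleftrightarrow> inC lam 0 T u \<and> inLinf lam 1 T u \<and> has_H_deriv lam T u u' \<and> inC lam 0 T u'"

definition W1inf_norm :: "(nat \<Rightarrow> real) \<Rightarrow> real \<Rightarrow> (real \<Rightarrow> coeffs) \<Rightarrow> (real \<Rightarrow> coeffs) \<Rightarrow> real" where
  "W1inf_norm lam T u u' = Cnorm lam 0 T u + Linf_norm lam 1 T u + Cnorm lam 0 T u'"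

text \<open>d^2u/dt^2 = Au in the sense: u'(t) - u'(s) = \<integral>_s^t A u(r) dr in H^{-1},
 written coefficientwise (A acts as multiplication of the k-th coefficient by -lam k).\<close>
definition wave_eq :: "(nat \<Rightarrow> real) \<Rightarrow> real \<Rightarrow> (real \<Rightarrow> coeffs) \<Rightarrow> (real \<Rightarrow> coeffs) \<Rightarrow> bool" where
  "wave_eq lam T u u' \<longleftrightarrow> (\<forall>s t k. 0 \<le> s \<longrightarrow> s \<le> t \<longrightarrow> t \<le> T \<longrightarrow>
      u' t k - u' s k = integral {s..t} (\<lambda>r. - complex_of_real (lam k) * u r k))"

definition is_solution :: "(nat \<Rightarrow> real) \<Rightarrow> real \<Rightarrow> real \<Rightarrow> coeffs \<Rightarrow> coeffs \<Rightarrow>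
    (real \<Rightarrow> coeffs) \<Rightarrow> (real \<Rightarrow> coeffs) \<Rightarrow> bool" where
  "is_solution lam T \<omega> a g u u' \<longleftrightarrow> inW1inf lam T u u' \<and> wave_eq lam T u u' \<and> u 0 = a \<and>
     (\<forall>k. integral {0..T} (\<lambda>t. exp (\<i> * complex_of_real (\<omega> * t)) * u t k) = g k)"

end

theory Submission
  imports Defs
begin

text \<open>
  Expanding in the eigenbasis decouples the problem: the k-th coefficient of a solution satisfies
  \<open>u\<^sub>k'' = -\<lambda>\<^sub>k u\<^sub>k\<close>, so \<open>u\<^sub>k(t) = a\<^sub>k cos(\<mu>\<^sub>k t) + \<beta>\<^sub>k sin(\<mu>\<^sub>k t)\<close> with \<open>\<mu>\<^sub>k = \<surd>\<lambda>\<^sub>k\<close>, and the integral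
  condition becomes \<open>a\<^sub>k C(\<mu>\<^sub>k) + \<beta>\<^sub>k S(\<mu>\<^sub>k) = g\<^sub>k\<close>, where \<open>S(\<mu>)\<close> and \<open>C(\<mu>)\<close> are the moments of
  \<open>sin \<mu>t\<close> and \<open>cos \<mu>t\<close> against \<open>e\<^sup>i\<^sup>\<omega>\<^sup>t\<close> on \<open>[0,T]\<close>. Integrating by parts twice gives
  \<open>(\<omega>\<^sup>2 - \<mu>\<^sup>2) S(\<mu>) = e\<^sup>i\<^sup>\<omega>\<^sup>T (\<mu> cos \<mu>T - i\<omega> sin \<mu>T) - \<mu>\<close>. The hypothesis \<open>e\<^sup>2\<^sup>i\<^sup>\<omega>\<^sup>T \<noteq> 1\<close> says
  exactly \<open>sin \<omega>T \<noteq> 0\<close>; this rules out \<open>S(\<mu>) = 0\<close> for every \<open>\<mu> > 0\<close> and yields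
  \<open>\<mu> |S(\<mu>)| \<ge> |sin \<omega>T| / 2\<close> for large \<open>\<mu>\<close>. Hence \<open>\<beta>\<^sub>k\<close> is uniquely determined, with
  \<open>|\<beta>\<^sub>k| \<le> K (\<mu>\<^sub>k |g\<^sub>k| + |a\<^sub>k|)\<close>, so the energy \<open>\<Sum> \<lambda>\<^sub>k (|a\<^sub>k|\<^sup>2 + |\<beta>\<^sub>k|\<^sup>2)\<close>, which controls every part
  of the \<open>W\<^sup>1\<^sub>\<infinity>\<close>-norm, is bounded by \<open>(\<parallel>a\<parallel>\<^sub>H\<^sub>1 + \<parallel>g\<parallel>\<^sub>H\<^sub>2)\<^sup>2\<close>.
\<close>

lemma power2_add_le_2: "((x::real) + y)\<^sup>2 \<le> 2 * (x\<^sup>2 + y\<^sup>2)"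
  using zero_le_power2[of "x - y"] by (simp add: power2_eq_square algebra_simps)

lemma norm_diff_sq_le:
  fixes a b :: "'a::real_normed_vector"
  shows "(norm (a - b))\<^sup>2 \<le> 2 * ((norm a)\<^sup>2 + (norm b)\<^sup>2)"
  by (rule order_trans[OF power_mono[OF norm_triangle_ineq4] power2_add_le_2]) simp

lemma has_vector_derivative_iff_quotient:
  fixes f :: "real \<Rightarrow> 'a::real_normed_field"
  shows "(f has_vector_derivative D) (at t within S) \<longleftrightarrow>
    ((\<lambda>s. (f s - f t) / of_real (s - t)) \<longlongrightarrow> D) (at t within S)"
proof -
  have "norm (f s - f t - (s - t) *\<^sub>R D) / norm (s - t) = norm ((f s - f t) / of_real (s - t) - D)"
    if "s \<noteq> t" for s
  proof -
    have "(f s - f t) / of_real (s - t) - D = (f s - f t - (s - t) *\<^sub>R D) / of_real (s - t)"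
      using that by (simp add: field_simps scaleR_conv_of_real)
    then show ?thesis by (simp add: norm_divide del: of_real_diff)
  qed
  then have "((\<lambda>s. norm (f s - f t - (s - t) *\<^sub>R D) / norm (s - t)) \<longlongrightarrow> 0) (at t within S) \<longleftrightarrow>
      ((\<lambda>s. norm ((f s - f t) / of_real (s - t) - D)) \<longlongrightarrow> 0) (at t within S)"
    by (intro Lim_cong_within) auto
  also have "\<dots> \<longleftrightarrow> ((\<lambda>s. (f s - f t) / of_real (s - t) - D) \<longlongrightarrow> 0) (at t within S)"
    by (rule tendsto_norm_zero_iff)
  finally show ?thesis
    by (simp add: has_vector_derivative_def has_derivative_iff_norm bounded_linear_scaleR_left LIM_zero_iff)
qed

section \<open>The harmonic oscillator\<close>

definition osc :: "complex \<Rightarrow> complex \<Rightarrow> real \<Rightarrow> real \<Rightarrow> complex" where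
  "osc A B m t = A * of_real (cos (m * t)) + B * of_real (sin (m * t))"

definition osc_deriv :: "complex \<Rightarrow> complex \<Rightarrow> real \<Rightarrow> real \<Rightarrow> complex" where
  "osc_deriv A B m t = of_real m * (B * of_real (cos (m * t)) - A * of_real (sin (m * t)))"

lemma osc_0 [simp]: "osc A B m 0 = A"
  by (simp add: osc_def)

lemma osc_deriv_0 [simp]: "osc_deriv A B m 0 = of_real m * B"
  by (simp add: osc_deriv_def)

lemma osc_deriv_eq: "osc_deriv A B m t = of_real m * osc B (- A) m t"
  by (simp add: osc_deriv_def osc_def)

lemma has_vector_derivative_osc:
  "(osc A B m has_vector_derivative osc_deriv A B m t) (at t within S)"
  unfolding osc_def osc_deriv_def
  by (rule derivative_eq_intros refl)+ (simp add: algebra_simps)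

lemma has_vector_derivative_osc_deriv:
  "(osc_deriv A B m has_vector_derivative (- of_real (m\<^sup>2) * osc A B m t)) (at t within S)"
  unfolding osc_def osc_deriv_def
  by (rule derivative_eq_intros refl)+ (simp add: algebra_simps power2_eq_square)

lemma continuous_on_osc: "continuous_on S (osc A B m)"
  unfolding osc_def by (intro continuous_intros)

lemma continuous_on_osc_deriv: "continuous_on S (osc_deriv A B m)"
  unfolding osc_deriv_def by (intro continuous_intros)

lemma norm_osc_le: "cmod (osc A B m t) \<le> cmod A + cmod B"
proof -
  have "cmod (osc A B m t) \<le> cmod A * \<bar>cos (m * t)\<bar> + cmod B * \<bar>sin (m * t)\<bar>"
    unfolding osc_def by (metis norm_mult norm_of_real norm_triangle_ineq)
  also have "\<dots> \<le> cmod A + cmod B"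
    by (intro add_mono mult_left_le) auto
  finally show ?thesis .
qed

lemma norm_osc_deriv_le:
  assumes "m \<ge> 0"
  shows "cmod (osc_deriv A B m t) \<le> m * (cmod A + cmod B)"
  using norm_osc_le[of B "- A" m t] assms
  by (simp add: osc_deriv_eq norm_mult add.commute mult_left_mono)

lemma norm_osc_diff_le:
  assumes "m \<ge> 0"
  shows "cmod (osc A B m s - osc A B m t) \<le> m * (cmod A + cmod B) * \<bar>s - t\<bar>"
proof -
  have "(osc A B m has_derivative (\<lambda>h. h *\<^sub>R osc_deriv A B m x)) (at x within UNIV)" for x
    using has_vector_derivative_osc by (simp add: has_vector_derivative_def)
  moreover have "onorm (\<lambda>h. h *\<^sub>R osc_deriv A B m x) \<le> m * (cmod A + cmod B)" for x
    using norm_osc_deriv_le[OF assms]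
    by (simp add: onorm_scaleR_left[OF bounded_linear_ident, unfolded onorm_id])
  ultimately have "norm (osc A B m s - osc A B m t) \<le> m * (cmod A + cmod B) * norm (s - t)"
    by (intro differentiable_bound[OF convex_UNIV]) auto
  then show ?thesis by simp
qed

lemma norm_osc_sq_le: "(cmod (osc A B m t))\<^sup>2 \<le> 2 * ((cmod A)\<^sup>2 + (cmod B)\<^sup>2)"
  by (rule order_trans[OF power_mono[OF norm_osc_le] power2_add_le_2]) simp

lemma norm_osc_deriv_sq_le:
  assumes "m \<ge> 0"
  shows "(cmod (osc_deriv A B m t))\<^sup>2 \<le> 2 * m\<^sup>2 * ((cmod A)\<^sup>2 + (cmod B)\<^sup>2)"
proof -
  have "(cmod (osc_deriv A B m t))\<^sup>2 \<le> m\<^sup>2 * (cmod A + cmod B)\<^sup>2"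
    using power_mono[OF norm_osc_deriv_le[OF assms]] by (simp add: power_mult_distrib)
  also have "\<dots> \<le> m\<^sup>2 * (2 * ((cmod A)\<^sup>2 + (cmod B)\<^sup>2))"
    by (intro mult_left_mono power2_add_le_2) auto
  finally show ?thesis by (simp add: algebra_simps)
qed

lemma norm_osc_quotient_sq_le:
  assumes "m \<ge> 0"
  shows "(cmod ((osc A B m s - osc A B m t) / of_real (s - t)))\<^sup>2 \<le> 2 * m\<^sup>2 * ((cmod A)\<^sup>2 + (cmod B)\<^sup>2)"
proof -
  have "cmod ((osc A B m s - osc A B m t) / of_real (s - t)) \<le> m * (cmod A + cmod B)"
    using norm_osc_diff_le[OF assms, of A B s t] assms
    by (cases "s = t") (auto simp: norm_divide divide_le_eq simp del: of_real_diff)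
  from power_mono[OF this] have "(cmod ((osc A B m s - osc A B m t) / of_real (s - t)))\<^sup>2 \<le> m\<^sup>2 * (cmod A + cmod B)\<^sup>2"
    by (simp add: power_mult_distrib)
  also have "\<dots> \<le> m\<^sup>2 * (2 * ((cmod A)\<^sup>2 + (cmod B)\<^sup>2))"
    by (intro mult_left_mono power2_add_le_2) auto
  finally show ?thesis by (simp add: algebra_simps)
qed

lemma has_vector_derivative_exp_scaled:
  fixes c :: complex
  shows
  "((\<lambda>t. exp (c * of_real t)) has_vector_derivative c * exp (c * of_real t)) (at t within S)"
proof -
  have "((\<lambda>z. exp (c * z)) has_field_derivative c * exp (c * of_real t)) (at (of_real t))"
    by (rule derivative_eq_intros refl)+ simp
  from has_vector_derivative_real_field[OF this] show ?thesis
    by (simp add: has_vector_derivative_at_within)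
qed

lemma linear_ode_zero:
  fixes w :: "real \<Rightarrow> complex"
  assumes w: "\<And>s. s \<in> {0..T} \<Longrightarrow> (w has_vector_derivative c * w s) (at s within {0..T})"
    and w0: "w 0 = 0" and t: "t \<in> {0..T}"
  shows "w t = 0"
proof -
  have "((\<lambda>s. w s * exp (- c * of_real s)) has_vector_derivative 0) (at s within {0..T})"
    if "s \<in> {0..T}" for s
    by (rule has_vector_derivative_eq_rhs[OF has_vector_derivative_mult[OF w[OF that] has_vector_derivative_exp_scaled]])
      (simp add: algebra_simps)
  then obtain k where k: "\<And>s. s \<in> {0..T} \<Longrightarrow> w s * exp (- c * of_real s) = k"
    using has_vector_derivative_zero_constant[OF convex_real_interval(5), of 0 T "\<lambda>s. w s * exp (- c * of_real s)"]
    by blast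
  have "0 \<in> {0..T}"
    using t by simp
  then show ?thesis
    using k[OF t] k[of 0] w0 by simp
qed

lemma harmonic_ode_unique:
  fixes f f' :: "real \<Rightarrow> complex"
  assumes m: "m > 0"
    and f: "\<And>t. t \<in> {0..T} \<Longrightarrow> (f has_vector_derivative f' t) (at t within {0..T})"
    and f': "\<And>t. t \<in> {0..T} \<Longrightarrow> (f' has_vector_derivative (- of_real (m\<^sup>2) * f t)) (at t within {0..T})"
    and t: "t \<in> {0..T}"
  shows "f t = osc (f 0) (f' 0 / of_real m) m t \<and> f' t = osc_deriv (f 0) (f' 0 / of_real m) m t"
proof -
  define h where "h s = f s - osc (f 0) (f' 0 / of_real m) m s" for s
  define h' where "h' s = f' s - osc_deriv (f 0) (f' 0 / of_real m) m s" for s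
  have dh: "(h has_vector_derivative h' s) (at s within {0..T})" if "s \<in> {0..T}" for s
    unfolding h_def[abs_def] h'_def
    using has_vector_derivative_diff[OF f[OF that] has_vector_derivative_osc] .
  have dh': "(h' has_vector_derivative (- of_real (m\<^sup>2) * h s)) (at s within {0..T})" if "s \<in> {0..T}" for s
    unfolding h_def h'_def[abs_def]
    by (rule has_vector_derivative_eq_rhs[OF has_vector_derivative_diff[OF f'[OF that] has_vector_derivative_osc_deriv]])
       (simp add: algebra_simps)
  \<comment> \<open>\<open>h \<plusminus> i h' / m\<close> solve the first-order equations \<open>w' = \<mp> i m w\<close>.\<close>
  have "h t + \<i> * h' t / of_real m = 0" "h t - \<i> * h' t / of_real m = 0"
  proof -
    have dw: "((\<lambda>s. h s + \<i> * h' s / of_real m) has_vector_derivative - \<i> * of_real m * (h s + \<i> * h' s / of_real m))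
        (at s within {0..T})"
      and dv: "((\<lambda>s. h s - \<i> * h' s / of_real m) has_vector_derivative \<i> * of_real m * (h s - \<i> * h' s / of_real m))
        (at s within {0..T})" if "s \<in> {0..T}" for s
      using m by (auto intro!: has_vector_derivative_eq_rhs[OF has_vector_derivative_add]
          has_vector_derivative_eq_rhs[OF has_vector_derivative_diff] has_vector_derivative_divide
          has_vector_derivative_mult_right dh dh' that simp: field_simps power2_eq_square)
    moreover have "h 0 = 0" "h' 0 = 0"
      using m by (simp_all add: h_def h'_def)
    ultimately show "h t + \<i> * h' t / of_real m = 0" "h t - \<i> * h' t / of_real m = 0"
      using linear_ode_zero[where w="\<lambda>s. h s + \<i> * h' s / of_real m", OF dw _ t]
        linear_ode_zero[where w="\<lambda>s. h s - \<i> * h' s / of_real m", OF dv _ t] by simp_all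
  qed
  then have "h t = 0" "h' t = 0"
    using m by (auto simp: field_simps)
  then show ?thesis
    by (simp add: h_def h'_def)
qed

section \<open>Moments against the weight \<open>e\<^sup>i\<^sup>\<omega>\<^sup>t\<close>\<close>

definition sin_moment :: "real \<Rightarrow> real \<Rightarrow> real \<Rightarrow> complex" where
  "sin_moment T \<omega> m = integral {0..T} (\<lambda>t. exp (\<i> * complex_of_real (\<omega> * t)) * of_real (sin (m * t)))"

definition cos_moment :: "real \<Rightarrow> real \<Rightarrow> real \<Rightarrow> complex" where
  "cos_moment T \<omega> m = integral {0..T} (\<lambda>t. exp (\<i> * complex_of_real (\<omega> * t)) * of_real (cos (m * t)))"

lemma integral_exp_osc:
  "integral {0..T} (\<lambda>t. exp (\<i> * complex_of_real (\<omega> * t)) * osc A B m t) =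
    A * cos_moment T \<omega> m + B * sin_moment T \<omega> m"
proof -
  have "(\<lambda>t. exp (\<i> * complex_of_real (\<omega> * t)) * of_real (cos (m * t))) integrable_on {0..T}"
    "(\<lambda>t. exp (\<i> * complex_of_real (\<omega> * t)) * of_real (sin (m * t))) integrable_on {0..T}"
    by (intro integrable_continuous_interval continuous_intros)+
  then show ?thesis
    unfolding cos_moment_def sin_moment_def osc_def
    by (simp add: algebra_simps integral_add integrable_on_mult_right integral_mult_right)
qed

text \<open>Integration by parts twice: the weight \<open>e\<^sup>i\<^sup>\<omega>\<^sup>t\<close> and the oscillation \<open>cos, sin (m t)\<close>
  are eigenfunctions of \<open>d\<^sup>2/dt\<^sup>2\<close> with eigenvalues \<open>-\<omega>\<^sup>2\<close> and \<open>-m\<^sup>2\<close>.\<close>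
lemma integral_exp_osc_by_parts:
  assumes "0 \<le> T"
  shows "of_real (\<omega>\<^sup>2 - m\<^sup>2) * integral {0..T} (\<lambda>t. exp (\<i> * complex_of_real (\<omega> * t)) * osc A B m t) =
    exp (\<i> * complex_of_real (\<omega> * T)) * (osc_deriv A B m T - \<i> * of_real \<omega> * osc A B m T)
    - (osc_deriv A B m 0 - \<i> * of_real \<omega> * osc A B m 0)"
proof -
  let ?E = "\<lambda>t. exp (\<i> * complex_of_real (\<omega> * t))"
  define G where "G t = ?E t * (osc_deriv A B m t - \<i> * of_real \<omega> * osc A B m t)" for t
  have dE: "(?E has_vector_derivative \<i> * of_real \<omega> * ?E t) (at t within {0..T})" for t
    using has_vector_derivative_exp_scaled[of "\<i> * of_real \<omega>" t] by (simp add: mult.assoc)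
  have "(G has_vector_derivative of_real (\<omega>\<^sup>2 - m\<^sup>2) * (?E t * osc A B m t)) (at t within {0..T})" for t
  proof -
    have "(G has_vector_derivative ?E t * (- of_real (m\<^sup>2) * osc A B m t - \<i> * of_real \<omega> * osc_deriv A B m t)
        + \<i> * of_real \<omega> * ?E t * (osc_deriv A B m t - \<i> * of_real \<omega> * osc A B m t)) (at t within {0..T})"
      unfolding G_def[abs_def]
      by (intro has_vector_derivative_mult has_vector_derivative_diff has_vector_derivative_mult_right
          dE has_vector_derivative_osc has_vector_derivative_osc_deriv)
    then show ?thesis
      by (rule has_vector_derivative_eq_rhs) (simp add: algebra_simps power2_eq_square)
  qed
  then have "((\<lambda>t. of_real (\<omega>\<^sup>2 - m\<^sup>2) * (?E t * osc A B m t)) has_integral G T - G 0) {0..T}"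
    using assms by (intro fundamental_theorem_of_calculus) auto
  then have "integral {0..T} (\<lambda>t. of_real (\<omega>\<^sup>2 - m\<^sup>2) * (?E t * osc A B m t)) = G T - G 0"
    by (rule integral_unique)
  then show ?thesis
    by (simp add: G_def)
qed

lemma sin_moment_by_parts:
  assumes "0 \<le> T"
  shows "of_real (\<omega>\<^sup>2 - m\<^sup>2) * sin_moment T \<omega> m =
    exp (\<i> * complex_of_real (\<omega> * T)) * (of_real m * of_real (cos (m * T)) - \<i> * of_real \<omega> * of_real (sin (m * T)))
    - of_real m"
  using integral_exp_osc_by_parts[OF assms, of \<omega> m 0 1] integral_exp_osc[of T \<omega> 0 1 m]
  by (simp add: osc_def osc_deriv_def)

lemma cos_moment_by_parts:
  assumes "0 \<le> T"
  shows "of_real (\<omega>\<^sup>2 - m\<^sup>2) * cos_moment T \<omega> m =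
    exp (\<i> * complex_of_real (\<omega> * T)) * (- of_real m * of_real (sin (m * T)) - \<i> * of_real \<omega> * of_real (cos (m * T)))
    + \<i> * of_real \<omega>"
  using integral_exp_osc_by_parts[OF assms, of \<omega> m 1 0] integral_exp_osc[of T \<omega> 1 0 m]
  by (simp add: osc_def osc_deriv_def)

lemma exp_2i_eq_1_iff: "exp (2 * \<i> * complex_of_real x) = 1 \<longleftrightarrow> sin x = 0"
  by (auto simp: exp_eq_1 sin_zero_iff_int2)

lemma sin_moment_nonzero_off_resonance:
  assumes m: "m > 0" and T: "T > 0" and "\<omega>\<^sup>2 \<noteq> m\<^sup>2" and "sin (\<omega> * T) \<noteq> 0"
  shows "sin_moment T \<omega> m \<noteq> 0"
proof
  assume "sin_moment T \<omega> m = 0"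
  let ?z = "exp (\<i> * complex_of_real (\<omega> * T))"
  let ?c = "cos (m * T)" and ?s = "sin (m * T)"
  define w where "w = of_real m * of_real ?c - \<i> * of_real \<omega> * of_real ?s"
  have zw: "?z * w = of_real m"
    using sin_moment_by_parts[of T \<omega> m] T \<open>sin_moment T \<omega> m = 0\<close> by (simp add: w_def)
  then have "(cmod w)\<^sup>2 = m\<^sup>2"
    using m by (metis norm_exp_i_times norm_mult norm_of_real abs_of_pos mult_1 Re_complex_of_real)
  then have "(m * ?c)\<^sup>2 + (\<omega> * ?s)\<^sup>2 = m\<^sup>2"
    unfolding cmod_power2 w_def by simp
  then have "(\<omega>\<^sup>2 - m\<^sup>2) * ?s\<^sup>2 = 0"
    by (simp add: power_mult_distrib cos_squared_eq algebra_simps)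
  with assms(3) have "?s = 0" by simp
  then have "?c\<^sup>2 = 1" and "?z * of_real ?c = 1"
    using zw m sin_cos_squared_add[of "m * T"] by (auto simp: w_def)
  then have "exp (2 * \<i> * complex_of_real (\<omega> * T)) = 1"
    by (metis exp_double mult.assoc power_mult_distrib of_real_power of_real_1 mult_1_right power_one)
  with assms(4) show False
    using exp_2i_eq_1_iff[of "\<omega> * T"] by blast
qed

text \<open>At resonance \<open>\<omega> = \<plusminus>m\<close> the by-parts identity degenerates; the moment is computed from an explicit
  antiderivative instead.\<close>
lemma sin_moment_at_resonance:
  assumes m: "m > 0" and eq: "\<omega>\<^sup>2 = m\<^sup>2" and T: "0 \<le> T"
  shows "sin_moment T \<omega> m = of_real ((1 - cos (2 * m * T)) / (4 * m))
    + \<i> * of_real (\<omega> / m * (T / 2 - sin (2 * m * T) / (4 * m)))"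
proof -
  define \<sigma> where "\<sigma> = \<omega> / m"
  have "\<omega> = m \<or> \<omega> = - m" using eq m by (metis power2_eq_iff)
  then have cs: "cos (\<omega> * t) = cos (m * t) \<and> sin (\<omega> * t) = \<sigma> * sin (m * t)" for t
    using m by (auto simp: \<sigma>_def)
  define H where "H t = complex_of_real (- cos (2 * m * t) / (4 * m))
    + \<i> * complex_of_real (\<sigma> * (t / 2 - sin (2 * m * t) / (4 * m)))" for t
  have "(H has_vector_derivative exp (\<i> * complex_of_real (\<omega> * t)) * of_real (sin (m * t))) (at t within {0..T})" for t
  proof -
    have "((\<lambda>t. - cos (2 * m * t) / (4 * m)) has_real_derivative sin (2 * m * t) * (2 * m) / (4 * m)) (at t within {0..T})"
      "((\<lambda>t. \<sigma> * (t / 2 - sin (2 * m * t) / (4 * m))) has_real_derivative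
        \<sigma> * (1 / 2 - cos (2 * m * t) * (2 * m) / (4 * m))) (at t within {0..T})"
      using m by (auto intro!: derivative_eq_intros simp: field_simps)
    then have "(H has_vector_derivative complex_of_real (sin (2 * m * t) * (2 * m) / (4 * m))
        + \<i> * complex_of_real (\<sigma> * (1 / 2 - cos (2 * m * t) * (2 * m) / (4 * m)))) (at t within {0..T})"
      unfolding H_def[abs_def]
      by (intro has_vector_derivative_add has_vector_derivative_mult_right has_vector_derivative_of_real)
    moreover have "sin (2 * m * t) = 2 * sin (m * t) * cos (m * t)" "cos (2 * m * t) = 1 - 2 * (sin (m * t))\<^sup>2"
      using sin_double[of "m * t"] cos_double_sin[of "m * t"] by (simp_all add: mult.assoc)
    then have "complex_of_real (sin (2 * m * t) * (2 * m) / (4 * m))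
        + \<i> * complex_of_real (\<sigma> * (1 / 2 - cos (2 * m * t) * (2 * m) / (4 * m)))
        = exp (\<i> * complex_of_real (\<omega> * t)) * of_real (sin (m * t))"
      using m cs[of t] by (simp only:) (simp add: complex_eq_iff Re_exp Im_exp field_simps power2_eq_square)
    ultimately show ?thesis by simp
  qed
  then have "((\<lambda>t. exp (\<i> * complex_of_real (\<omega> * t)) * of_real (sin (m * t))) has_integral H T - H 0) {0..T}"
    using T by (intro fundamental_theorem_of_calculus) auto
  then show ?thesis
    unfolding sin_moment_def by (simp add: integral_unique H_def \<sigma>_def diff_divide_distrib)
qed

lemma sin_moment_nonzero_at_resonance:
  assumes m: "m > 0" and T: "T > 0" and eq: "\<omega>\<^sup>2 = m\<^sup>2"
  shows "sin_moment T \<omega> m \<noteq> 0"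
proof
  assume "sin_moment T \<omega> m = 0"
  then have "cos (2 * m * T) = 1" and im: "\<omega> / m * (T / 2 - sin (2 * m * T) / (4 * m)) = 0"
    using sin_moment_at_resonance[OF m eq] T m by (auto simp: complex_eq_iff)
  then have "sin (2 * m * T) = 0"
    using sin_cos_squared_add[of "2 * m * T"] by simp
  moreover have "\<omega> \<noteq> 0"
    using eq m by auto
  ultimately show False
    using im T m by simp
qed

lemma sin_moment_nonzero:
  assumes "m > 0" and "T > 0" and "sin (\<omega> * T) \<noteq> 0"
  shows "sin_moment T \<omega> m \<noteq> 0"
  using sin_moment_nonzero_off_resonance[OF assms(1,2) _ assms(3)] sin_moment_nonzero_at_resonance[OF assms(1,2)]
  by blast

lemma abs_sin_le_norm_exp_times_minus_1:
  "\<bar>sin x\<bar> \<le> cmod (exp (\<i> * complex_of_real x) * of_real c - 1)"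
proof -
  have "(cmod (exp (\<i> * complex_of_real x) * of_real c - 1))\<^sup>2 = (cos x * c - 1)\<^sup>2 + (sin x * c)\<^sup>2"
    by (simp add: cmod_power2 Re_exp Im_exp)
  also have "\<dots> = (sin x)\<^sup>2 + (c - cos x)\<^sup>2"
    unfolding power_mult_distrib sin_squared_eq by (simp add: power2_eq_square algebra_simps)
  finally have "(sin x)\<^sup>2 \<le> (cmod (exp (\<i> * complex_of_real x) * of_real c - 1))\<^sup>2"
    by simp
  then show ?thesis
    by (metis abs_le_square_iff abs_norm_cancel)
qed

lemma sin_moment_lower_bound:
  assumes T: "0 \<le> T" and m: "0 < m" and mq: "2 * \<bar>\<omega>\<bar> \<le> m * \<bar>sin (\<omega> * T)\<bar>"
  shows "m * \<bar>sin (\<omega> * T)\<bar> / 2 \<le> (m\<^sup>2 - \<omega>\<^sup>2) * cmod (sin_moment T \<omega> m)"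
proof -
  let ?z = "exp (\<i> * complex_of_real (\<omega> * T))"
  let ?c = "cos (m * T)" and ?s = "sin (m * T)"
  have "m * \<bar>sin (\<omega> * T)\<bar> \<le> m"
    using m by (intro mult_left_le) auto
  then have "2 * \<bar>\<omega>\<bar> \<le> m"
    using mq by linarith
  then have "0 \<le> m\<^sup>2 - \<omega>\<^sup>2"
    using m power_mono[of "\<bar>\<omega>\<bar>" m 2] by simp
  define w where "w = of_real m * (?z * of_real ?c - 1) - \<i> * of_real \<omega> * ?z * of_real ?s"
  have "of_real (\<omega>\<^sup>2 - m\<^sup>2) * sin_moment T \<omega> m = w"
    using sin_moment_by_parts[OF T, of \<omega> m] unfolding w_def by (simp add: algebra_simps)
  then have "cmod w = (m\<^sup>2 - \<omega>\<^sup>2) * cmod (sin_moment T \<omega> m)"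
    using \<open>0 \<le> m\<^sup>2 - \<omega>\<^sup>2\<close> by (metis norm_mult norm_of_real abs_minus_commute abs_of_nonneg)
  moreover have "m * \<bar>sin (\<omega> * T)\<bar> \<le> cmod (of_real m * (?z * of_real ?c - 1))"
    using abs_sin_le_norm_exp_times_minus_1[of "\<omega> * T" ?c] m by (simp add: norm_mult)
  moreover have "cmod (\<i> * of_real \<omega> * ?z * of_real ?s) \<le> \<bar>\<omega>\<bar>"
    by (simp add: norm_mult mult_left_le)
  ultimately show ?thesis
    using norm_triangle_ineq2[of "of_real m * (?z * of_real ?c - 1)" "\<i> * of_real \<omega> * ?z * of_real ?s"] mq
    unfolding w_def by linarith
qed

lemma cos_moment_upper_bound:
  assumes T: "0 \<le> T" and m: "2 * \<bar>\<omega>\<bar> \<le> m"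
  shows "(m\<^sup>2 - \<omega>\<^sup>2) * cmod (cos_moment T \<omega> m) \<le> 2 * m"
proof -
  let ?z = "exp (\<i> * complex_of_real (\<omega> * T))"
  let ?c = "cos (m * T)" and ?s = "sin (m * T)"
  have "0 \<le> m\<^sup>2 - \<omega>\<^sup>2"
    using m power_mono[of "\<bar>\<omega>\<bar>" m 2] by simp
  define v where "v = ?z * (- of_real m * of_real ?s - \<i> * of_real \<omega> * of_real ?c) + \<i> * of_real \<omega>"
  have "of_real (\<omega>\<^sup>2 - m\<^sup>2) * cos_moment T \<omega> m = v"
    using cos_moment_by_parts[OF T, of \<omega> m] unfolding v_def by simp
  then have "(m\<^sup>2 - \<omega>\<^sup>2) * cmod (cos_moment T \<omega> m) = cmod v"
    using \<open>0 \<le> m\<^sup>2 - \<omega>\<^sup>2\<close> by (metis norm_mult norm_of_real abs_minus_commute abs_of_nonneg)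
  also have "\<dots> \<le> cmod (- of_real m * of_real ?s - \<i> * of_real \<omega> * of_real ?c :: complex) + \<bar>\<omega>\<bar>"
    using norm_triangle_ineq[of "?z * (- of_real m * of_real ?s - \<i> * of_real \<omega> * of_real ?c)" "\<i> * of_real \<omega>"]
    unfolding v_def by (simp add: norm_mult)
  also have "\<dots> \<le> m * \<bar>?s\<bar> + \<bar>\<omega>\<bar> * \<bar>?c\<bar> + \<bar>\<omega>\<bar>"
    using norm_triangle_ineq4[of "- of_real m * of_real ?s :: complex" "\<i> * of_real \<omega> * of_real ?c"] m
    by (simp add: norm_mult)
  also have "\<dots> \<le> m + \<bar>\<omega>\<bar> + \<bar>\<omega>\<bar>"
    using m by (intro add_mono mult_left_le) auto
  finally show ?thesis
    using m by linarith
qed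

lemma sin_moment_high_frequency:
  assumes T: "0 \<le> T" and m: "0 < m" and q: "sin (\<omega> * T) \<noteq> 0" and mq: "2 * \<bar>\<omega>\<bar> \<le> m * \<bar>sin (\<omega> * T)\<bar>"
  shows "1 / (m * cmod (sin_moment T \<omega> m)) \<le> 2 / \<bar>sin (\<omega> * T)\<bar>"
    and "cmod (cos_moment T \<omega> m / sin_moment T \<omega> m) \<le> 4 / \<bar>sin (\<omega> * T)\<bar>"
proof -
  let ?q = "\<bar>sin (\<omega> * T)\<bar>"
  have q0: "0 < ?q" using q by simp
  have S: "m * ?q / 2 \<le> (m\<^sup>2 - \<omega>\<^sup>2) * cmod (sin_moment T \<omega> m)"
    by (rule sin_moment_lower_bound[OF T m mq])
  have "m * ?q \<le> m"
    using m by (intro mult_left_le) auto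
  then have C: "(m\<^sup>2 - \<omega>\<^sup>2) * cmod (cos_moment T \<omega> m) \<le> 2 * m"
    using cos_moment_upper_bound[OF T] mq by simp
  have "(m\<^sup>2 - \<omega>\<^sup>2) * cmod (sin_moment T \<omega> m) \<le> m * (m * cmod (sin_moment T \<omega> m))"
    using mult_right_mono[of "m\<^sup>2 - \<omega>\<^sup>2" "m\<^sup>2" "cmod (sin_moment T \<omega> m)"] by (simp add: power2_eq_square mult.assoc)
  then have "?q / 2 \<le> m * cmod (sin_moment T \<omega> m)"
    using S m by (smt (verit) mult_le_cancel_left_pos times_divide_eq_right)
  then show "1 / (m * cmod (sin_moment T \<omega> m)) \<le> 2 / ?q"
    using q0 by (simp add: field_simps)
  have "0 < (m\<^sup>2 - \<omega>\<^sup>2) * cmod (sin_moment T \<omega> m)"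
    using S m q0 by (smt (verit) divide_pos_pos mult_pos_pos)
  then have "m\<^sup>2 - \<omega>\<^sup>2 \<noteq> 0"
    by auto
  then have "cmod (cos_moment T \<omega> m / sin_moment T \<omega> m)
      = ((m\<^sup>2 - \<omega>\<^sup>2) * cmod (cos_moment T \<omega> m)) / ((m\<^sup>2 - \<omega>\<^sup>2) * cmod (sin_moment T \<omega> m))"
    by (simp add: norm_divide)
  also have "\<dots> \<le> (2 * m) / (m * ?q / 2)"
    using S C m q0 by (intro frac_le) auto
  also have "\<dots> = 4 / ?q"
    using m by (simp add: field_simps)
  finally show "cmod (cos_moment T \<omega> m / sin_moment T \<omega> m) \<le> 4 / ?q" .
qed

lemma bounded_if_eventually_bounded:
  fixes f :: "nat \<Rightarrow> 'a::real_normed_vector"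
  assumes "eventually (\<lambda>k. norm (f k) \<le> B) sequentially"
  obtains K where "\<And>k. norm (f k) \<le> K"
proof -
  have "eventually (\<lambda>k. norm (f k) \<le> norm B) sequentially"
    using assms by (rule eventually_mono) simp
  then have "Bseq f"
    using Bfun_const by (rule Bseq_eventually_mono)
  then show ?thesis
    using that by (meson BseqE)
qed

lemma filterlim_at_top_positive_bounded_below:
  fixes lam :: "nat \<Rightarrow> real"
  assumes pos: "\<forall>k. lam k > 0" and lim: "filterlim lam at_top sequentially"
  obtains l where "l > 0" and "\<And>k. l \<le> lam k"
proof -
  have "eventually (\<lambda>k. norm (1 / lam k) \<le> 1) sequentially"
    using filterlim_at_top[THEN iffD1, OF lim, rule_format, of 1]
    by (auto elim: eventually_mono)
  then obtain K where K: "\<And>k. norm (1 / lam k) \<le> K"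
    using bounded_if_eventually_bounded[of "\<lambda>k. 1 / lam k"] by blast
  have inv_le: "1 / lam k \<le> K" for k
    using K[of k] pos[rule_format, of k] by simp
  have "0 < K"
    using inv_le[of 0] pos by (smt (verit) zero_less_divide_1_iff)
  moreover have "1 / K \<le> lam k" for k
    using inv_le[of k] pos[rule_format, of k] \<open>0 < K\<close> by (simp add: field_simps)
  ultimately show ?thesis using that[of "1 / K"] by simp
qed

lemma moment_quotients_bounded:
  fixes lam :: "nat \<Rightarrow> real"
  assumes "filterlim lam at_top sequentially" and T: "T > 0" and \<omega>: "\<omega> \<noteq> 0" and q: "sin (\<omega> * T) \<noteq> 0"
  obtains K1 K2 where "\<And>k. 1 / (sqrt (lam k) * cmod (sin_moment T \<omega> (sqrt (lam k)))) \<le> K1"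
    and "\<And>k. cmod (cos_moment T \<omega> (sqrt (lam k)) / sin_moment T \<omega> (sqrt (lam k))) \<le> K2"
proof -
  define R where "R = 2 * \<bar>\<omega>\<bar> / \<bar>sin (\<omega> * T)\<bar>"
  have "eventually (\<lambda>k. R\<^sup>2 \<le> lam k) sequentially"
    using assms(1) by (simp add: filterlim_at_top)
  then have ev: "eventually (\<lambda>k. R \<le> sqrt (lam k)) sequentially"
    by (rule eventually_mono) (simp add: R_def real_le_rsqrt)
  have "0 < R"
    using \<omega> q by (simp add: R_def)
  have hf1: "norm (1 / (sqrt (lam k) * cmod (sin_moment T \<omega> (sqrt (lam k))))) \<le> 2 / \<bar>sin (\<omega> * T)\<bar>"
    and hf2: "norm (cos_moment T \<omega> (sqrt (lam k)) / sin_moment T \<omega> (sqrt (lam k))) \<le> 4 / \<bar>sin (\<omega> * T)\<bar>"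
    if "R \<le> sqrt (lam k)" for k
  proof -
    have "0 < sqrt (lam k)"
      using that \<open>0 < R\<close> by linarith
    moreover have "2 * \<bar>\<omega>\<bar> \<le> sqrt (lam k) * \<bar>sin (\<omega> * T)\<bar>"
      using that q by (simp add: R_def divide_le_eq)
    ultimately show "norm (1 / (sqrt (lam k) * cmod (sin_moment T \<omega> (sqrt (lam k))))) \<le> 2 / \<bar>sin (\<omega> * T)\<bar>"
      and "norm (cos_moment T \<omega> (sqrt (lam k)) / sin_moment T \<omega> (sqrt (lam k))) \<le> 4 / \<bar>sin (\<omega> * T)\<bar>"
      using sin_moment_high_frequency[OF less_imp_le[OF T] _ q] by simp_all
  qed
  have e1: "eventually (\<lambda>k. norm (1 / (sqrt (lam k) * cmod (sin_moment T \<omega> (sqrt (lam k))))) \<le> 2 / \<bar>sin (\<omega> * T)\<bar>) sequentially"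
    by (rule eventually_mono[OF ev hf1])
  have e2: "eventually (\<lambda>k. norm (cos_moment T \<omega> (sqrt (lam k)) / sin_moment T \<omega> (sqrt (lam k))) \<le> 4 / \<bar>sin (\<omega> * T)\<bar>) sequentially"
    by (rule eventually_mono[OF ev hf2])
  obtain K1 where K1: "\<And>k. norm (1 / (sqrt (lam k) * cmod (sin_moment T \<omega> (sqrt (lam k))))) \<le> K1"
    using bounded_if_eventually_bounded[OF e1] by blast
  moreover obtain K2 where K2: "\<And>k. norm (cos_moment T \<omega> (sqrt (lam k)) / sin_moment T \<omega> (sqrt (lam k))) \<le> K2"
    using bounded_if_eventually_bounded[OF e2] by blast
  ultimately show ?thesis
    using that[of K1 K2] abs_le_D1[OF K1[unfolded real_norm_def]] by simp
qed

section \<open>Square-summable coefficient sequences\<close>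

lemma Hnorm_nonneg: "0 \<le> Hnorm lam q w"
  by (simp add: Hnorm_def)

lemma Hsq_summand_nonneg:
  assumes "\<forall>k. lam k > 0"
  shows "0 \<le> lam k powi q * (cmod (w k))\<^sup>2"
  using assms by (simp add: less_imp_le zero_le_power_int)

lemma Hsq_eq_suminf:
  assumes "\<forall>k. lam k > 0" and "summable (\<lambda>k. lam k powi q * (cmod (w k))\<^sup>2)"
  shows "Hsq lam q w = ennreal (\<Sum>k. lam k powi q * (cmod (w k))\<^sup>2)"
  unfolding Hsq_def using assms
  by (intro suminf_ennreal2 Hsq_summand_nonneg)

lemma inH_iff_summable:
  assumes "\<forall>k. lam k > 0"
  shows "inH lam q w \<longleftrightarrow> summable (\<lambda>k. lam k powi q * (cmod (w k))\<^sup>2)"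
proof
  assume "inH lam q w"
  then show "summable (\<lambda>k. lam k powi q * (cmod (w k))\<^sup>2)"
    using assms by (intro summable_suminf_not_top Hsq_summand_nonneg) (auto simp: inH_def Hsq_def)
qed (simp add: inH_def Hsq_eq_suminf[OF assms])

lemma Hnorm_eq_sqrt_suminf:
  assumes "\<forall>k. lam k > 0" and "inH lam q w"
  shows "Hnorm lam q w = sqrt (\<Sum>k. lam k powi q * (cmod (w k))\<^sup>2)"
proof -
  have "summable (\<lambda>k. lam k powi q * (cmod (w k))\<^sup>2)"
    using assms by (simp add: inH_iff_summable)
  moreover have "0 \<le> (\<Sum>k. lam k powi q * (cmod (w k))\<^sup>2)"
    using calculation assms by (intro suminf_nonneg Hsq_summand_nonneg)
  ultimately show ?thesis
    using assms(1) by (simp add: Hnorm_def Hsq_eq_suminf)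
qed

lemma norm_le_Hnorm0:
  assumes "\<forall>k. lam k > 0" and "inH lam 0 w"
  shows "cmod (w k) \<le> Hnorm lam 0 w"
proof -
  have "summable (\<lambda>k. (cmod (w k))\<^sup>2)"
    using assms by (simp add: inH_iff_summable)
  then have "(cmod (w k))\<^sup>2 \<le> (\<Sum>k. (cmod (w k))\<^sup>2)"
    using sum_le_suminf[of _ "{k}"] by force
  then show ?thesis
    using assms Hnorm_eq_sqrt_suminf[of lam 0 w] by (simp add: real_le_rsqrt)
qed

lemma inH0_diff:
  assumes "\<forall>k. lam k > 0" and "inH lam 0 w" and "inH lam 0 z"
  shows "inH lam 0 (\<lambda>k. c * w k - d * z k)"
proof -
  have "summable (\<lambda>k. 2 * ((cmod c)\<^sup>2 * (cmod (w k))\<^sup>2) + 2 * ((cmod d)\<^sup>2 * (cmod (z k))\<^sup>2))"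
    using assms by (intro summable_add summable_mult) (simp_all add: inH_iff_summable)
  moreover have "(cmod (c * w k - d * z k))\<^sup>2 \<le> 2 * ((cmod c)\<^sup>2 * (cmod (w k))\<^sup>2) + 2 * ((cmod d)\<^sup>2 * (cmod (z k))\<^sup>2)" for k
    using norm_diff_sq_le[of "c * w k" "d * z k"] by (simp add: norm_mult power_mult_distrib)
  ultimately show ?thesis
    using assms(1) by (simp add: inH_iff_summable summable_comparison_test'[where N=0])
qed

lemma Hnorm0_tendsto_zero:
  fixes X :: "'b \<Rightarrow> coeffs"
  assumes pos: "\<forall>k. lam k > 0" and F: "F \<noteq> bot"
    and lim: "\<And>k. ((\<lambda>s. X s k) \<longlongrightarrow> 0) F"
    and bd: "eventually (\<lambda>s. \<forall>k. (cmod (X s k))\<^sup>2 \<le> M k) F" and M: "summable M"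
  shows "((\<lambda>s. Hnorm lam 0 (X s)) \<longlongrightarrow> 0) F"
proof -
  have "((\<lambda>s. \<Sum>k. (cmod (X s k))\<^sup>2) \<longlongrightarrow> (\<Sum>k. (0::real))) F"
  proof (rule tannerys_theorem[THEN conjunct2, THEN conjunct2])
    show "((\<lambda>s. (cmod (X s k))\<^sup>2) \<longlongrightarrow> 0) F" for k
      using tendsto_power[OF tendsto_norm_zero[OF lim[of k]], of 2] by simp
    have "\<forall>\<^sub>F (k, s) in sequentially \<times>\<^sub>F F. \<forall>k'. (cmod (X s k'))\<^sup>2 \<le> M k'"
      using eventually_prod2[where A=sequentially and B=F] bd by simp
    then show "\<forall>\<^sub>F (k, s) in sequentially \<times>\<^sub>F F. norm ((cmod (X s k))\<^sup>2) \<le> M k"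
      by (rule eventually_mono) auto
  qed (use M F in auto)
  then have "((\<lambda>s. sqrt (\<Sum>k. (cmod (X s k))\<^sup>2)) \<longlongrightarrow> 0) F"
    using tendsto_real_sqrt by fastforce
  moreover have "eventually (\<lambda>s. sqrt (\<Sum>k. (cmod (X s k))\<^sup>2) = Hnorm lam 0 (X s)) F"
    using bd
  proof eventually_elim
    case (elim s)
    then have "inH lam 0 (X s)"
      using pos M by (simp add: inH_iff_summable summable_comparison_test'[where N=0])
    then show ?case
      using pos by (simp add: Hnorm_eq_sqrt_suminf)
  qed
  ultimately show ?thesis
    by (rule Lim_transform_eventually)
qed

lemma at_within_Icc_nontrivial: "T > 0 \<Longrightarrow> t \<in> {0..T} \<Longrightarrow> at t within {0..(T::real)} \<noteq> bot"
  by (metis atLeastAtMost_iff at_within_Icc_at_left at_within_Icc_at_right at_within_Icc_at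
      trivial_limit_at_left_real trivial_limit_at_right_real trivial_limit_at order.order_iff_strict)

lemma inC0_of_dominated:
  assumes pos: "\<forall>k. lam k > 0" and T: "T > 0"
    and cont: "\<And>k. continuous_on {0..T} (\<lambda>s. u s k)"
    and bd: "\<And>k s. s \<in> {0..T} \<Longrightarrow> (cmod (u s k))\<^sup>2 \<le> B k" and B: "summable B"
  shows "inC lam 0 T u" and "Cnorm lam 0 T u \<le> sqrt (\<Sum>k. B k)"
proof -
  have inH: "inH lam 0 (u s)" if "s \<in> {0..T}" for s
    using pos B bd that by (simp add: inH_iff_summable summable_comparison_test'[where N=0])
  have "((\<lambda>s. Hnorm lam 0 (u s - u t)) \<longlongrightarrow> 0) (at t within {0..T})" if t: "t \<in> {0..T}" for t
  proof (rule Hnorm0_tendsto_zero[OF pos at_within_Icc_nontrivial[OF T t]])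
    show "((\<lambda>s. (u s - u t) k) \<longlongrightarrow> 0) (at t within {0..T})" for k
      using cont[of k] t by (simp add: continuous_on_def LIM_zero)
    show "\<forall>\<^sub>F s in at t within {0..T}. \<forall>k. (cmod ((u s - u t) k))\<^sup>2 \<le> 4 * B k"
      unfolding eventually_at_filter
    proof (intro always_eventually allI impI)
      fix s k assume "s \<in> {0..T}"
      then show "(cmod ((u s - u t) k))\<^sup>2 \<le> 4 * B k"
        using norm_diff_sq_le[of "u s k" "u t k"] bd[of s k] bd[OF t, of k] by simp
    qed
    show "summable (\<lambda>k. 4 * B k)"
      using B by (rule summable_mult)
  qed
  then show "inC lam 0 T u"
    using inH by (simp add: inC_def)
  have "Hnorm lam 0 (u t) \<le> sqrt (\<Sum>k. B k)" if "t \<in> {0..T}" for t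
    using inH[OF that] pos bd[OF that] B
    by (simp add: Hnorm_eq_sqrt_suminf real_sqrt_le_mono suminf_le inH_iff_summable)
  then show "Cnorm lam 0 T u \<le> sqrt (\<Sum>k. B k)"
    unfolding Cnorm_def using T by (intro cSUP_least) auto
qed

lemma has_H_deriv_of_dominated:
  assumes pos: "\<forall>k. lam k > 0" and T: "T > 0"
    and d: "\<And>k t. t \<in> {0..T} \<Longrightarrow> ((\<lambda>s. u s k) has_vector_derivative u' t k) (at t within {0..T})"
    and quot: "\<And>k s t. s \<in> {0..T} \<Longrightarrow> t \<in> {0..T} \<Longrightarrow> (cmod ((u s k - u t k) / of_real (s - t)))\<^sup>2 \<le> B k"
    and deriv: "\<And>k t. t \<in> {0..T} \<Longrightarrow> (cmod (u' t k))\<^sup>2 \<le> B k"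
    and B: "summable B"
  shows "has_H_deriv lam T u u'"
  unfolding has_H_deriv_def
proof
  fix t assume t: "t \<in> {0..T}"
  show "((\<lambda>s. Hnorm lam 0 ((\<lambda>k. (u s k - u t k) / complex_of_real (s - t)) - u' t)) \<longlongrightarrow> 0) (at t within {0..T})"
  proof (rule Hnorm0_tendsto_zero[OF pos at_within_Icc_nontrivial[OF T t]])
    show "((\<lambda>s. ((\<lambda>k. (u s k - u t k) / complex_of_real (s - t)) - u' t) k) \<longlongrightarrow> 0) (at t within {0..T})" for k
      using d[OF t, of k] by (simp add: has_vector_derivative_iff_quotient LIM_zero)
    show "\<forall>\<^sub>F s in at t within {0..T}. \<forall>k. (cmod (((\<lambda>k. (u s k - u t k) / complex_of_real (s - t)) - u' t) k))\<^sup>2 \<le> 4 * B k"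
      unfolding eventually_at_filter
    proof (intro always_eventually allI impI)
      fix s k assume "s \<in> {0..T}"
      then show "(cmod (((\<lambda>k. (u s k - u t k) / complex_of_real (s - t)) - u' t) k))\<^sup>2 \<le> 4 * B k"
        using norm_diff_sq_le[of "(u s k - u t k) / complex_of_real (s - t)" "u' t k"]
          quot[of s t k] deriv[OF t, of k] t by simp
    qed
    show "summable (\<lambda>k. 4 * B k)"
      using B by (rule summable_mult)
  qed
qed

lemma continuous_on_coeff_of_inC:
  assumes pos: "\<forall>k. lam k > 0" and v: "inC lam 0 T v"
  shows "continuous_on {0..T} (\<lambda>s. v s k)"
  unfolding continuous_on_def
proof
  fix t assume t: "t \<in> {0..T}"
  have "((\<lambda>s. v s k - v t k) \<longlongrightarrow> 0) (at t within {0..T})"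
  proof (rule Lim_null_comparison)
    show "((\<lambda>s. Hnorm lam 0 (v s - v t)) \<longlongrightarrow> 0) (at t within {0..T})"
      using v t by (simp add: inC_def)
    show "\<forall>\<^sub>F s in at t within {0..T}. cmod (v s k - v t k) \<le> Hnorm lam 0 (v s - v t)"
      unfolding eventually_at_filter
    proof (intro always_eventually allI impI)
      fix s assume "s \<in> {0..T}"
      then have "inH lam 0 (\<lambda>k. 1 * v s k - 1 * v t k)"
        using v t pos by (intro inH0_diff) (auto simp: inC_def)
      then show "cmod (v s k - v t k) \<le> Hnorm lam 0 (v s - v t)"
        using norm_le_Hnorm0[OF pos, of "v s - v t" k] by (simp add: fun_diff_def)
    qed
  qed
  then show "((\<lambda>s. v s k) \<longlongrightarrow> v t k) (at t within {0..T})"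
    by (simp add: LIM_zero_iff)
qed

lemma has_vector_derivative_coeff_of_inW1inf:
  assumes pos: "\<forall>k. lam k > 0" and "inW1inf lam T v v'" and t: "t \<in> {0..T}"
  shows "((\<lambda>s. v s k) has_vector_derivative v' t k) (at t within {0..T})"
  unfolding has_vector_derivative_iff_quotient
proof (rule LIM_zero_cancel, rule Lim_null_comparison)
  have v: "inC lam 0 T v" "inC lam 0 T v'" "has_H_deriv lam T v v'"
    using assms(2) by (simp_all add: inW1inf_def)
  let ?W = "\<lambda>s. (\<lambda>k. (v s k - v t k) / complex_of_real (s - t)) - v' t"
  show "((\<lambda>s. Hnorm lam 0 (?W s)) \<longlongrightarrow> 0) (at t within {0..T})"
    using v t by (simp add: has_H_deriv_def)
  show "\<forall>\<^sub>F s in at t within {0..T}. cmod ((v s k - v t k) / of_real (s - t) - v' t k) \<le> Hnorm lam 0 (?W s)"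
    unfolding eventually_at_filter
  proof (intro always_eventually allI impI)
    fix s assume "s \<in> {0..T}"
    then have "inH lam 0 (\<lambda>k. (1 / of_real (s - t)) * v s k - (1 / of_real (s - t)) * v t k)"
      using v t pos by (intro inH0_diff) (auto simp: inC_def)
    from inH0_diff[OF pos this, of "v' t" 1 1] have "inH lam 0 (?W s)"
      using v(2) t by (simp add: inC_def fun_diff_def diff_divide_distrib)
    then show "cmod ((v s k - v t k) / of_real (s - t) - v' t k) \<le> Hnorm lam 0 (?W s)"
      using norm_le_Hnorm0[OF pos, of "?W s" k] by simp
  qed
qed

lemma inLinf_of_bounded:
  assumes "(\<lambda>t. Hsq lam q (u t)) \<in> borel_measurable (restrict_space lborel {0..T})"
    and "\<And>t. t \<in> {0..T} \<Longrightarrow> Hsq lam q (u t) \<le> ennreal X" and "X \<ge> 0"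
  shows "inLinf lam q T u" and "Linf_norm lam q T u \<le> sqrt X"
proof -
  have "Linf_sq lam q T u \<le> ennreal X"
    unfolding Linf_sq_def using assms(1)
    by (rule esssup_I) (rule AE_I2, use assms(2) in \<open>auto simp: space_restrict_space\<close>)
  then show "inLinf lam q T u" and "Linf_norm lam q T u \<le> sqrt X"
    using assms(3) enn2real_mono[of "Linf_sq lam q T u" "ennreal X"]
    by (auto simp: inLinf_def Linf_norm_def le_less_trans)
qed

lemma esssup_cong_space:
  assumes "\<And>x. x \<in> space M \<Longrightarrow> f x = g x"
  shows "esssup M f = esssup M g"
proof (cases "f \<in> borel_measurable M")
  case True
  moreover have "g \<in> borel_measurable M"
    using True measurable_cong[of M f g borel] assms by blast
  ultimately show ?thesis
    using assms by (intro esssup_AE_cong AE_I2) auto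
next
  case False
  moreover have "g \<notin> borel_measurable M"
    using False measurable_cong[of M f g borel] assms by blast
  ultimately show ?thesis
    by (simp add: esssup_non_measurable)
qed

lemma W1inf_norm_cong:
  assumes "\<And>t. t \<in> {0..T} \<Longrightarrow> u t = v t" and "\<And>t. t \<in> {0..T} \<Longrightarrow> u' t = v' t"
  shows "W1inf_norm lam T u u' = W1inf_norm lam T v v'"
proof -
  have "Linf_sq lam 1 T u = Linf_sq lam 1 T v"
    unfolding Linf_sq_def using assms(1) by (intro esssup_cong_space) (simp add: space_restrict_space)
  then show ?thesis
    using assms by (simp add: W1inf_norm_def Cnorm_def Linf_norm_def)
qed

section \<open>Series solutions of the wave equation\<close>

definition wave_series :: "(nat \<Rightarrow> real) \<Rightarrow> coeffs \<Rightarrow> coeffs \<Rightarrow> real \<Rightarrow> coeffs" where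
  "wave_series lam A B t k = osc (A k) (B k) (sqrt (lam k)) t"

definition wave_series_deriv :: "(nat \<Rightarrow> real) \<Rightarrow> coeffs \<Rightarrow> coeffs \<Rightarrow> real \<Rightarrow> coeffs" where
  "wave_series_deriv lam A B t k = osc_deriv (A k) (B k) (sqrt (lam k)) t"

definition mode_energy :: "(nat \<Rightarrow> real) \<Rightarrow> coeffs \<Rightarrow> coeffs \<Rightarrow> nat \<Rightarrow> real" where
  "mode_energy lam A B k = lam k * ((cmod (A k))\<^sup>2 + (cmod (B k))\<^sup>2)"

lemma wave_series_0 [simp]: "wave_series lam A B 0 = A"
  by (simp add: fun_eq_iff wave_series_def)

lemma wave_eq_wave_series:
  assumes "\<forall>k. lam k > 0"
  shows "wave_eq lam T (wave_series lam A B) (wave_series_deriv lam A B)"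
  unfolding wave_eq_def
proof (intro allI impI)
  fix s t k assume "0 \<le> s" "s \<le> t" "t \<le> T"
  have "((\<lambda>r. - complex_of_real (lam k) * wave_series lam A B r k) has_integral
      wave_series_deriv lam A B t k - wave_series_deriv lam A B s k) {s..t}"
    unfolding wave_series_def wave_series_deriv_def
    using \<open>s \<le> t\<close> assms has_vector_derivative_osc_deriv[of "A k" "B k" "sqrt (lam k)"]
    by (intro fundamental_theorem_of_calculus) (auto simp: less_imp_le)
  then show "wave_series_deriv lam A B t k - wave_series_deriv lam A B s k =
      integral {s..t} (\<lambda>r. - complex_of_real (lam k) * wave_series lam A B r k)"
    by (rule integral_unique[symmetric])
qed

lemma measurable_Hsq_wave_series:
  "(\<lambda>t. Hsq lam q (wave_series lam A B t)) \<in> borel_measurable (restrict_space lborel S)"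
  unfolding Hsq_def
proof (intro borel_measurable_suminf_order measurable_restrict_space1)
  fix k
  have "continuous_on UNIV (\<lambda>t. lam k powi q * (cmod (wave_series lam A B t k))\<^sup>2)"
    unfolding wave_series_def osc_def by (intro continuous_intros)
  then have "(\<lambda>t. lam k powi q * (cmod (wave_series lam A B t k))\<^sup>2) \<in> borel_measurable borel"
    by (rule borel_measurable_continuous_onI)
  then show "(\<lambda>t. ennreal (lam k powi q * (cmod (wave_series lam A B t k))\<^sup>2)) \<in> borel_measurable lborel"
    by measurable
qed

lemma wave_series_sq_le:
  assumes pos: "\<forall>k. lam k > 0"
  shows "(cmod (wave_series lam A B t k))\<^sup>2 \<le> 2 * ((cmod (A k))\<^sup>2 + (cmod (B k))\<^sup>2)"
    and "(cmod (wave_series_deriv lam A B t k))\<^sup>2 \<le> 2 * mode_energy lam A B k"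
    and "(cmod ((wave_series lam A B s k - wave_series lam A B t k) / of_real (s - t)))\<^sup>2
      \<le> 2 * mode_energy lam A B k"
proof -
  have "0 \<le> lam k" "(sqrt (lam k))\<^sup>2 = lam k"
    using pos by (simp_all add: less_imp_le)
  then show "(cmod (wave_series lam A B t k))\<^sup>2 \<le> 2 * ((cmod (A k))\<^sup>2 + (cmod (B k))\<^sup>2)"
    and "(cmod (wave_series_deriv lam A B t k))\<^sup>2 \<le> 2 * mode_energy lam A B k"
    and "(cmod ((wave_series lam A B s k - wave_series lam A B t k) / of_real (s - t)))\<^sup>2
      \<le> 2 * mode_energy lam A B k"
    using norm_osc_sq_le norm_osc_deriv_sq_le[of "sqrt (lam k)" "A k" "B k" t]
      norm_osc_quotient_sq_le[of "sqrt (lam k)" "A k" "B k" s t]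
    by (simp_all add: wave_series_def wave_series_deriv_def mode_energy_def mult.assoc)
qed

lemma Hsq_wave_series_le:
  assumes pos: "\<forall>k. lam k > 0" and E: "summable (mode_energy lam A B)"
  shows "Hsq lam 1 (wave_series lam A B t) \<le> ennreal (\<Sum>k. 2 * mode_energy lam A B k)"
proof -
  have le: "lam k powi 1 * (cmod (wave_series lam A B t k))\<^sup>2 \<le> 2 * mode_energy lam A B k" for k
    using mult_left_mono[OF wave_series_sq_le(1)[OF pos], of "lam k" A B t k] pos
    by (simp add: mode_energy_def less_imp_le algebra_simps)
  moreover have "\<bar>lam k powi 1 * (cmod (wave_series lam A B t k))\<^sup>2\<bar> = lam k powi 1 * (cmod (wave_series lam A B t k))\<^sup>2" for k
    using Hsq_summand_nonneg[OF pos] by (rule abs_of_nonneg)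
  ultimately have sm: "summable (\<lambda>k. lam k powi 1 * (cmod (wave_series lam A B t k))\<^sup>2)"
    by (intro summable_comparison_test'[OF summable_mult[OF E], where N=0]) simp
  show ?thesis
    unfolding Hsq_eq_suminf[OF pos sm] by (intro ennreal_leI suminf_le le sm summable_mult E)
qed

lemma wave_series_inW1inf:
  assumes pos: "\<forall>k. lam k > 0" and T: "T > 0" and l: "l > 0" "\<forall>k. l \<le> lam k"
    and E: "summable (mode_energy lam A B)"
  shows "inW1inf lam T (wave_series lam A B) (wave_series_deriv lam A B)"
    and "W1inf_norm lam T (wave_series lam A B) (wave_series_deriv lam A B)
      \<le> (sqrt (2 / l) + 2 * sqrt 2) * sqrt (\<Sum>k. mode_energy lam A B k)"
proof -
  let ?u = "wave_series lam A B" and ?u' = "wave_series_deriv lam A B"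
  define Q where "Q k = (cmod (A k))\<^sup>2 + (cmod (B k))\<^sup>2" for k
  have QE: "Q k \<le> mode_energy lam A B k / l" for k
    using mult_right_mono[OF l(2)[rule_format, of k], of "Q k"] l(1)
    by (simp add: Q_def mode_energy_def field_simps)
  have Q: "summable Q"
    using QE by (intro summable_comparison_test'[OF summable_divide[OF E], where N=0]) (simp add: Q_def)
  have E0: "0 \<le> (\<Sum>k. mode_energy lam A B k)"
    using pos by (intro suminf_nonneg[OF E]) (simp add: mode_energy_def less_imp_le)
  note u = wave_series_sq_le(1)[OF pos, of A B, folded Q_def]
    and u' = wave_series_sq_le(2)[OF pos] and quot = wave_series_sq_le(3)[OF pos]
  have cont: "continuous_on {0..T} (\<lambda>s. ?u s k)" and cont': "continuous_on {0..T} (\<lambda>s. ?u' s k)" for k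
    by (simp_all add: wave_series_def wave_series_deriv_def continuous_on_osc continuous_on_osc_deriv)
  have C: "inC lam 0 T ?u" "Cnorm lam 0 T ?u \<le> sqrt (\<Sum>k. 2 * Q k)"
    using inC0_of_dominated[where u="wave_series lam A B", OF pos T cont u summable_mult[OF Q]] by blast+
  have C': "inC lam 0 T ?u'" "Cnorm lam 0 T ?u' \<le> sqrt (\<Sum>k. 2 * mode_energy lam A B k)"
    using inC0_of_dominated[where u="wave_series_deriv lam A B", OF pos T cont' u' summable_mult[OF E]] by blast+
  have L: "inLinf lam 1 T ?u" "Linf_norm lam 1 T ?u \<le> sqrt (\<Sum>k. 2 * mode_energy lam A B k)"
    using inLinf_of_bounded[OF measurable_Hsq_wave_series Hsq_wave_series_le[OF pos E]] E0 E
    by (simp_all add: suminf_mult)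
  have "((\<lambda>s. ?u s k) has_vector_derivative ?u' t k) (at t within {0..T})" for k t
    by (simp add: wave_series_def wave_series_deriv_def has_vector_derivative_osc)
  then have D: "has_H_deriv lam T ?u ?u'"
    by (rule has_H_deriv_of_dominated[OF pos T _ quot u' summable_mult[OF E]])
  show "inW1inf lam T ?u ?u'"
    using C C' L D by (simp add: inW1inf_def)
  have "sqrt (\<Sum>k. 2 * Q k) \<le> sqrt (2 / l) * sqrt (\<Sum>k. mode_energy lam A B k)"
    using suminf_le[OF QE Q summable_divide[OF E]] l(1)
    by (simp add: suminf_mult[OF Q] suminf_divide[OF E] real_sqrt_mult[symmetric] mult_left_mono)
  moreover have "sqrt (\<Sum>k. 2 * mode_energy lam A B k) = sqrt 2 * sqrt (\<Sum>k. mode_energy lam A B k)"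
    by (simp add: suminf_mult[OF E] real_sqrt_mult)
  ultimately show "W1inf_norm lam T ?u ?u' \<le> (sqrt (2 / l) + 2 * sqrt 2) * sqrt (\<Sum>k. mode_energy lam A B k)"
    using C C' L by (simp add: W1inf_norm_def algebra_simps)
qed

lemma has_vector_derivative_coeff_of_wave_eq:
  assumes pos: "\<forall>k. lam k > 0" and v: "inW1inf lam T v v'" and w: "wave_eq lam T v v'" and t: "t \<in> {0..T}"
  shows "((\<lambda>s. v' s k) has_vector_derivative - of_real (lam k) * v t k) (at t within {0..T})"
proof -
  have "continuous_on {0..T} (\<lambda>r. - complex_of_real (lam k) * v r k)"
    using v continuous_on_coeff_of_inC[OF pos] by (intro continuous_intros) (simp add: inW1inf_def)
  then have D: "((\<lambda>s. integral {0..s} (\<lambda>r. - complex_of_real (lam k) * v r k) + v' 0 k)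
      has_vector_derivative - of_real (lam k) * v t k) (at t within {0..T})"
    using integral_has_vector_derivative[OF _ t] by (simp only: has_vector_derivative_add_const)
  have eq: "v' s k = integral {0..s} (\<lambda>r. - complex_of_real (lam k) * v r k) + v' 0 k" if "s \<in> {0..T}" for s
    using w that unfolding wave_eq_def by (metis atLeastAtMost_iff diff_eq_eq order_refl)
  show ?thesis
    by (rule has_vector_derivative_transform[OF t eq D])
qed

lemma wave_eq_coeff_eq_osc:
  assumes pos: "\<forall>k. lam k > 0" and v: "inW1inf lam T v v'" and w: "wave_eq lam T v v'" and t: "t \<in> {0..T}"
  shows "v t k = osc (v 0 k) (v' 0 k / of_real (sqrt (lam k))) (sqrt (lam k)) t
    \<and> v' t k = osc_deriv (v 0 k) (v' 0 k / of_real (sqrt (lam k))) (sqrt (lam k)) t"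
proof (rule harmonic_ode_unique[OF _ _ _ t])
  show "0 < sqrt (lam k)"
    using pos by simp
  show "((\<lambda>s. v s k) has_vector_derivative v' s k) (at s within {0..T})" if "s \<in> {0..T}" for s
    using has_vector_derivative_coeff_of_inW1inf[OF pos v that] .
  show "((\<lambda>s. v' s k) has_vector_derivative - of_real ((sqrt (lam k))\<^sup>2) * v s k) (at s within {0..T})"
    if "s \<in> {0..T}" for s
    using has_vector_derivative_coeff_of_wave_eq[OF pos v w that] pos by (simp add: less_imp_le)
qed

section \<open>The boundary value problem\<close>

definition bvp_coeff :: "(nat \<Rightarrow> real) \<Rightarrow> real \<Rightarrow> real \<Rightarrow> coeffs \<Rightarrow> coeffs \<Rightarrow> coeffs" where
  "bvp_coeff lam T \<omega> a g k = (g k - a k * cos_moment T \<omega> (sqrt (lam k))) / sin_moment T \<omega> (sqrt (lam k))"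

lemma integral_exp_wave_series_bvp_coeff:
  assumes "sin_moment T \<omega> (sqrt (lam k)) \<noteq> 0"
  shows "integral {0..T} (\<lambda>t. exp (\<i> * complex_of_real (\<omega> * t)) * wave_series lam a (bvp_coeff lam T \<omega> a g) t k) = g k"
  using assms unfolding wave_series_def integral_exp_osc by (simp add: bvp_coeff_def)

lemma solution_eq_wave_series:
  assumes pos: "\<forall>k. lam k > 0" and S: "\<And>k. sin_moment T \<omega> (sqrt (lam k)) \<noteq> 0"
    and sol: "is_solution lam T \<omega> a g v v'" and t: "t \<in> {0..T}"
  shows "v t = wave_series lam a (bvp_coeff lam T \<omega> a g) t
    \<and> v' t = wave_series_deriv lam a (bvp_coeff lam T \<omega> a g) t"
proof -
  have v: "inW1inf lam T v v'" "wave_eq lam T v v'" "v 0 = a"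
    and g: "\<And>k. integral {0..T} (\<lambda>t. exp (\<i> * complex_of_real (\<omega> * t)) * v t k) = g k"
    using sol by (simp_all add: is_solution_def)
  have "v t k = wave_series lam a (bvp_coeff lam T \<omega> a g) t k
    \<and> v' t k = wave_series_deriv lam a (bvp_coeff lam T \<omega> a g) t k" for k
  proof -
    define B where "B = v' 0 k / of_real (sqrt (lam k))"
    have rep: "v s k = osc (a k) B (sqrt (lam k)) s \<and> v' s k = osc_deriv (a k) B (sqrt (lam k)) s"
      if "s \<in> {0..T}" for s
      using wave_eq_coeff_eq_osc[OF pos v(1,2) that] v(3) by (simp add: B_def)
    have "g k = integral {0..T} (\<lambda>s. exp (\<i> * complex_of_real (\<omega> * s)) * osc (a k) B (sqrt (lam k)) s)"
      unfolding g[symmetric] using rep by (intro integral_cong) auto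
    then have "B = bvp_coeff lam T \<omega> a g k"
      using S[of k] unfolding integral_exp_osc by (simp add: bvp_coeff_def field_simps)
    then show ?thesis
      using rep[OF t] by (simp add: wave_series_def wave_series_deriv_def)
  qed
  then show ?thesis
    by (simp add: fun_eq_iff)
qed

lemma norm_bvp_coeff_sq_le:
  fixes S C G A :: complex and m K1 K2 :: real
  assumes "m > 0" and "S \<noteq> 0" and "1 / (m * cmod S) \<le> K1" and "cmod (C / S) \<le> K2"
  shows "(cmod ((G - A * C) / S))\<^sup>2 \<le> 2 * K1\<^sup>2 * m\<^sup>2 * (cmod G)\<^sup>2 + 2 * K2\<^sup>2 * (cmod A)\<^sup>2"
proof -
  have "cmod ((G - A * C) / S) \<le> cmod (G / S) + cmod (A * (C / S))"
    using norm_triangle_ineq4[of "G / S" "A * (C / S)"] by (simp add: diff_divide_distrib)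
  moreover have "cmod (G / S) = (m * cmod G) * (1 / (m * cmod S))"
    using assms(1,2) by (simp add: norm_divide field_simps)
  moreover have "\<dots> \<le> (m * cmod G) * K1"
    using assms(1,3) by (intro mult_left_mono) auto
  moreover have "cmod (A * (C / S)) \<le> cmod A * K2"
    unfolding norm_mult using assms(4) by (intro mult_left_mono) auto
  ultimately have "cmod ((G - A * C) / S) \<le> K1 * m * cmod G + K2 * cmod A"
    by (simp add: algebra_simps)
  then have "(cmod ((G - A * C) / S))\<^sup>2 \<le> (K1 * m * cmod G + K2 * cmod A)\<^sup>2"
    by (intro power_mono) auto
  also have "\<dots> \<le> 2 * ((K1 * m * cmod G)\<^sup>2 + (K2 * cmod A)\<^sup>2)"
    by (rule power2_add_le_2)
  finally show ?thesis
    by (simp add: power_mult_distrib algebra_simps)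
qed

lemma bvp_mode_energy_le:
  assumes pos: "\<forall>k. lam k > 0" and S: "sin_moment T \<omega> (sqrt (lam k)) \<noteq> 0"
    and K1: "1 / (sqrt (lam k) * cmod (sin_moment T \<omega> (sqrt (lam k)))) \<le> K1"
    and K2: "cmod (cos_moment T \<omega> (sqrt (lam k)) / sin_moment T \<omega> (sqrt (lam k))) \<le> K2"
  shows "mode_energy lam a (bvp_coeff lam T \<omega> a g) k
    \<le> (1 + 2 * K1\<^sup>2 + 2 * K2\<^sup>2) * (lam k * (cmod (a k))\<^sup>2 + (lam k)\<^sup>2 * (cmod (g k))\<^sup>2)"
proof -
  let ?a = "lam k * (cmod (a k))\<^sup>2" and ?g = "(lam k)\<^sup>2 * (cmod (g k))\<^sup>2"
  have "lam k * (cmod (bvp_coeff lam T \<omega> a g k))\<^sup>2 \<le> lam k * (2 * K1\<^sup>2 * lam k * (cmod (g k))\<^sup>2 + 2 * K2\<^sup>2 * (cmod (a k))\<^sup>2)"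
    using norm_bvp_coeff_sq_le[OF _ S K1 K2, of "g k" "a k"] pos[rule_format, of k]
    by (intro mult_left_mono) (simp_all add: bvp_coeff_def)
  then have "lam k * (cmod (bvp_coeff lam T \<omega> a g k))\<^sup>2 \<le> 2 * K1\<^sup>2 * ?g + 2 * K2\<^sup>2 * ?a"
    by (simp add: algebra_simps power2_eq_square)
  moreover have "0 \<le> ?a" "0 \<le> ?g"
    using pos by (simp_all add: less_imp_le)
  moreover have "(1 + 2 * K1\<^sup>2 + 2 * K2\<^sup>2) * (?a + ?g) = ?a + ?g + 2 * K1\<^sup>2 * ?a + 2 * K1\<^sup>2 * ?g
      + 2 * K2\<^sup>2 * ?a + 2 * K2\<^sup>2 * ?g"
    by (simp add: algebra_simps)
  moreover have "0 \<le> 2 * K1\<^sup>2 * ?a" "0 \<le> 2 * K2\<^sup>2 * ?g"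
    using pos by (simp_all add: less_imp_le)
  ultimately show ?thesis
    unfolding mode_energy_def distrib_left by linarith
qed

lemma bvp_mode_energy_bound:
  assumes pos: "\<forall>k. lam k > 0" and a: "inH lam 1 a" and g: "inH lam 2 g"
    and S: "\<And>k. sin_moment T \<omega> (sqrt (lam k)) \<noteq> 0"
    and K1: "\<And>k. 1 / (sqrt (lam k) * cmod (sin_moment T \<omega> (sqrt (lam k)))) \<le> K1"
    and K2: "\<And>k. cmod (cos_moment T \<omega> (sqrt (lam k)) / sin_moment T \<omega> (sqrt (lam k))) \<le> K2"
  shows "summable (mode_energy lam a (bvp_coeff lam T \<omega> a g))"
    and "(\<Sum>k. mode_energy lam a (bvp_coeff lam T \<omega> a g) k)
      \<le> (1 + 2 * K1\<^sup>2 + 2 * K2\<^sup>2) * (Hnorm lam 1 a + Hnorm lam 2 g)\<^sup>2"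
proof -
  define K3 where "K3 = 1 + 2 * K1\<^sup>2 + 2 * K2\<^sup>2"
  let ?a = "\<lambda>k. lam k * (cmod (a k))\<^sup>2" and ?g = "\<lambda>k. (lam k)\<^sup>2 * (cmod (g k))\<^sup>2"
  have sa: "summable ?a" and sg: "summable ?g"
    using a g pos by (simp_all add: inH_iff_summable)
  have "mode_energy lam a (bvp_coeff lam T \<omega> a g) k \<le> K3 * (?a k + ?g k)" for k
    unfolding K3_def by (rule bvp_mode_energy_le[OF pos S K1 K2])
  moreover have sK: "summable (\<lambda>k. K3 * (?a k + ?g k))"
    using sa sg by (intro summable_mult summable_add)
  moreover have "0 \<le> mode_energy lam a (bvp_coeff lam T \<omega> a g) k" for k
    using pos by (simp add: mode_energy_def less_imp_le)
  ultimately show E: "summable (mode_energy lam a (bvp_coeff lam T \<omega> a g))"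
    by (intro summable_comparison_test'[OF sK, where N=0]) auto
  have "(\<Sum>k. mode_energy lam a (bvp_coeff lam T \<omega> a g) k) \<le> (\<Sum>k. K3 * (?a k + ?g k))"
    by (intro suminf_le E sK) fact
  also have "\<dots> = K3 * ((\<Sum>k. ?a k) + (\<Sum>k. ?g k))"
    using sa sg by (simp add: suminf_mult summable_add suminf_add[symmetric])
  also have "\<dots> = K3 * ((Hnorm lam 1 a)\<^sup>2 + (Hnorm lam 2 g)\<^sup>2)"
    using sa sg pos Hnorm_eq_sqrt_suminf[OF pos a] Hnorm_eq_sqrt_suminf[OF pos g]
    by (simp add: suminf_nonneg less_imp_le)
  also have "\<dots> \<le> K3 * (Hnorm lam 1 a + Hnorm lam 2 g)\<^sup>2"
    unfolding K3_def by (intro mult_left_mono) (auto simp: power2_sum Hnorm_nonneg)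
  finally show "(\<Sum>k. mode_energy lam a (bvp_coeff lam T \<omega> a g) k) \<le> K3 * (Hnorm lam 1 a + Hnorm lam 2 g)\<^sup>2" .
qed

lemma bvp_wave_series_solution:
  assumes pos: "\<forall>k. lam k > 0" and T: "T > 0" and S: "\<And>k. sin_moment T \<omega> (sqrt (lam k)) \<noteq> 0"
    and l: "l > 0" "\<forall>k. l \<le> lam k"
    and K1: "\<And>k. 1 / (sqrt (lam k) * cmod (sin_moment T \<omega> (sqrt (lam k)))) \<le> K1"
    and K2: "\<And>k. cmod (cos_moment T \<omega> (sqrt (lam k)) / sin_moment T \<omega> (sqrt (lam k))) \<le> K2"
    and a: "inH lam 1 a" and g: "inH lam 2 g"
  shows "is_solution lam T \<omega> a g (wave_series lam a (bvp_coeff lam T \<omega> a g))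
      (wave_series_deriv lam a (bvp_coeff lam T \<omega> a g))"
    and "W1inf_norm lam T (wave_series lam a (bvp_coeff lam T \<omega> a g)) (wave_series_deriv lam a (bvp_coeff lam T \<omega> a g))
      \<le> (sqrt (2 / l) + 2 * sqrt 2) * sqrt (1 + 2 * K1\<^sup>2 + 2 * K2\<^sup>2) * (Hnorm lam 1 a + Hnorm lam 2 g)"
proof -
  note E = bvp_mode_energy_bound[OF pos a g S K1 K2]
  note W = wave_series_inW1inf[OF pos T l E(1)]
  show "is_solution lam T \<omega> a g (wave_series lam a (bvp_coeff lam T \<omega> a g))
      (wave_series_deriv lam a (bvp_coeff lam T \<omega> a g))"
    using W(1) wave_eq_wave_series[OF pos] integral_exp_wave_series_bvp_coeff[OF S]
    by (simp add: is_solution_def)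
  have "sqrt (\<Sum>k. mode_energy lam a (bvp_coeff lam T \<omega> a g) k)
      \<le> sqrt (1 + 2 * K1\<^sup>2 + 2 * K2\<^sup>2) * (Hnorm lam 1 a + Hnorm lam 2 g)"
    using real_sqrt_le_mono[OF E(2)] by (simp add: real_sqrt_mult Hnorm_nonneg)
  then show "W1inf_norm lam T (wave_series lam a (bvp_coeff lam T \<omega> a g)) (wave_series_deriv lam a (bvp_coeff lam T \<omega> a g))
      \<le> (sqrt (2 / l) + 2 * sqrt 2) * sqrt (1 + 2 * K1\<^sup>2 + 2 * K2\<^sup>2) * (Hnorm lam 1 a + Hnorm lam 2 g)"
    using order_trans[OF W(2) mult_left_mono] l(1) unfolding mult.assoc by simp
qed

theorem theorem1:
  fixes lam :: "nat \<Rightarrow> real" and T \<omega> :: real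
  assumes "\<forall>k. lam k > 0"
    and "filterlim lam at_top sequentially"
    and "T > 0" and "\<omega> \<noteq> 0"
    and "exp (2 * \<i> * complex_of_real (\<omega> * T)) \<noteq> 1"
  shows "\<exists>c>0. \<forall>a g. inH lam 1 a \<longrightarrow> inH lam 2 g \<longrightarrow>
           (\<exists>u u'. is_solution lam T \<omega> a g u u') \<and>
           (\<forall>u1 u1' u2 u2'. is_solution lam T \<omega> a g u1 u1' \<longrightarrow> is_solution lam T \<omega> a g u2 u2'
               \<longrightarrow> (\<forall>t\<in>{0..T}. u1 t = u2 t)) \<and>
           (\<forall>u u'. is_solution lam T \<omega> a g u u' \<longrightarrow>
               W1inf_norm lam T u u' \<le> c * (Hnorm lam 1 a + Hnorm lam 2 g))"
proof -
  have sin: "sin (\<omega> * T) \<noteq> 0"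
    using assms(5) exp_2i_eq_1_iff by blast
  have S: "\<And>k. sin_moment T \<omega> (sqrt (lam k)) \<noteq> 0"
    using sin_moment_nonzero[OF _ assms(3) sin] assms(1) by simp
  obtain l where l: "l > 0" "\<forall>k. l \<le> lam k"
    using filterlim_at_top_positive_bounded_below[OF assms(1,2)] by blast
  obtain K1 K2 where K1: "\<And>k. 1 / (sqrt (lam k) * cmod (sin_moment T \<omega> (sqrt (lam k)))) \<le> K1"
    and K2: "\<And>k. cmod (cos_moment T \<omega> (sqrt (lam k)) / sin_moment T \<omega> (sqrt (lam k))) \<le> K2"
    using moment_quotients_bounded[OF assms(2,3,4) sin] by blast
  define c where "c = (sqrt (2 / l) + 2 * sqrt 2) * sqrt (1 + 2 * K1\<^sup>2 + 2 * K2\<^sup>2)"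
  note solution = bvp_wave_series_solution[OF assms(1,3) S l K1 K2, folded c_def]
    and unique = solution_eq_wave_series[OF assms(1) S]
  have "c > 0"
    using l by (simp add: c_def add_pos_nonneg)
  moreover have "(\<exists>u u'. is_solution lam T \<omega> a g u u') \<and>
      (\<forall>u1 u1' u2 u2'. is_solution lam T \<omega> a g u1 u1' \<longrightarrow> is_solution lam T \<omega> a g u2 u2'
        \<longrightarrow> (\<forall>t\<in>{0..T}. u1 t = u2 t)) \<and>
      (\<forall>u u'. is_solution lam T \<omega> a g u u' \<longrightarrow> W1inf_norm lam T u u' \<le> c * (Hnorm lam 1 a + Hnorm lam 2 g))"
    if a: "inH lam 1 a" and g: "inH lam 2 g" for a g
  proof (intro conjI allI impI)
    show "\<exists>u u'. is_solution lam T \<omega> a g u u'"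
      using solution(1)[OF a g] by blast
    show "\<forall>t\<in>{0..T}. u1 t = u2 t"
      if "is_solution lam T \<omega> a g u1 u1'" "is_solution lam T \<omega> a g u2 u2'" for u1 u1' u2 u2'
      using unique[OF that(1)] unique[OF that(2)] by simp
    show "W1inf_norm lam T u u' \<le> c * (Hnorm lam 1 a + Hnorm lam 2 g)"
      if "is_solution lam T \<omega> a g u u'" for u u'
      using solution(2)[OF a g] W1inf_norm_cong[of T u _ u' _ lam] unique[OF that] by simp
  qed
  ultimately show ?thesis
    by blast
qed

end
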